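(* Let $(X,d,\kappa)$ be a complete digital metric space where $d$ is an $\ell_p$ metric for some $1\le p\le\infty$, and let $S,T:X\to X$ be commuting maps ($S\circ T=T\circ S$) with $S(X)\subset T(X)$. If there exist $\alpha\in(0,1)$ and a positive integer $k$ such that $d(S^k(x),S^k(y))\le\alpha\, d(T(x),T(y))$ for all $x,y\in X$, then $S$ and $T$ have a common fixed point.
   Context: A digital metric space is a triple $(X,d,\kappa)$ where $X\subset\mathbb{Z}^n$ for some positive integer $n$, $\kappa$ is an adjacency relation on $X$, and $d$ is a metric on $X$. The $\ell_p$ metric on $\mathbb{Z}^n$ is $d(x,y)=(\sum_i|x_i-y_i|^p)^{1/p}$ for $1\le p<\infty$ and $\max_i|x_i-y_i|$ for $p=\infty$. $S^k$ denotes the $k$-fold composition of $S$. *)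

theory Defs
  imports "HOL-Analysis.Analysis" "HOL-Library.Extended_Real"
begin

text \<open>Points of Z^n are modelled as vectors in int^'n (the dimension n = CARD('n)
 is an arbitrary fixed positive integer).\<close>

definition lp_dist :: "ereal \<Rightarrow> int ^ 'n \<Rightarrow> int ^ 'n \<Rightarrow> real" where
  "lp_dist p x y =
     (if p = \<infinity> then Max (range (\<lambda>i. real_of_int \<bar>x $ i - y $ i\<bar>))
      else (\<Sum>i\<in>UNIV. real_of_int \<bar>x $ i - y $ i\<bar> powr real_of_ereal p)
             powr (1 / real_of_ereal p))"

definition adjacency_on :: "(int ^ 'n) set \<Rightarrow> (int ^ 'n \<Rightarrow> int ^ 'n \<Rightarrow> bool) \<Rightarrow> bool" where
  "adjacency_on X \<kappa> \<longleftrightarrow>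
     (\<forall>x\<in>X. \<forall>y\<in>X. \<kappa> x y \<longrightarrow> \<kappa> y x) \<and> (\<forall>x\<in>X. \<not> \<kappa> x x)"

definition dcauchy :: "('a \<Rightarrow> 'a \<Rightarrow> real) \<Rightarrow> (nat \<Rightarrow> 'a) \<Rightarrow> bool" where
  "dcauchy d s \<longleftrightarrow> (\<forall>e>0. \<exists>N. \<forall>m\<ge>N. \<forall>n\<ge>N. d (s m) (s n) < e)"

definition dconverges_to :: "('a \<Rightarrow> 'a \<Rightarrow> real) \<Rightarrow> (nat \<Rightarrow> 'a) \<Rightarrow> 'a \<Rightarrow> bool" where
  "dconverges_to d s l \<longleftrightarrow> (\<forall>e>0. \<exists>N. \<forall>n\<ge>N. d (s n) l < e)"

definition dcomplete :: "'a set \<Rightarrow> ('a \<Rightarrow> 'a \<Rightarrow> real) \<Rightarrow> bool" where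
  "dcomplete X d \<longleftrightarrow>
     (\<forall>s. (\<forall>n. s n \<in> X) \<longrightarrow> dcauchy d s \<longrightarrow> (\<exists>l\<in>X. dconverges_to d s l))"

end

theory Submission
  imports Defs
begin

text \<open>Distinct points of \<open>\<int>\<^sup>n\<close> are at \<open>\<ell>\<^sub>p\<close>-distance at least 1. With \<open>R = S\<^sup>k\<close>, Jungck's iteration \<open>T x\<^sub>m\<^sub>+\<^sub>1 = R x\<^sub>m\<close> shrinks \<open>d(R x\<^sub>m, T x\<^sub>m)\<close>
  geometrically until it drops below 1, giving a coincidence point \<open>R x = T x\<close>. Commutativity
  makes \<open>T x\<close> a common fixed point of \<open>R\<close> and \<open>T\<close>, which is unique by the contraction
  inequality; as \<open>S\<close> commutes with \<open>R\<close> and \<open>T\<close>, \<open>S\<close> maps it to a common fixed point as well,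
  hence fixes it.\<close>

lemma lp_dist_ge_one:
  assumes "1 \<le> p" and "x \<noteq> y"
  shows "1 \<le> lp_dist p x y"
proof -
  let ?a = "\<lambda>i. real_of_int \<bar>x $ i - y $ i\<bar>"
  obtain i where "x $ i \<noteq> y $ i" using assms(2) by (metis vec_eq_iff)
  then have ai: "1 \<le> ?a i" by linarith
  show ?thesis
  proof (cases "p = \<infinity>")
    case True
    note ai
    also have "?a i \<le> Max (range ?a)" by (rule Max_ge) auto
    finally show ?thesis using True unfolding lp_dist_def by simp
  next
    case False
    define q where "q = real_of_ereal p"
    have q: "1 \<le> q" using assms(1) False unfolding q_def by (cases p) auto
    have "1 \<le> ?a i powr q" using ai q by (simp add: ge_one_powr_ge_zero)
    also have "\<dots> \<le> (\<Sum>j\<in>UNIV. ?a j powr q)" by (rule member_le_sum) auto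
    finally have "1 \<le> (\<Sum>j\<in>UNIV. ?a j powr q) powr (1 / q)"
      using q by (simp add: ge_one_powr_ge_zero)
    with False show ?thesis unfolding lp_dist_def q_def by simp
  qed
qed

lemma funpow_image_subset:
  assumes "f ` X \<subseteq> X"
  shows "(f ^^ n) ` X \<subseteq> X"
  by (induction n) (use assms in auto)

lemma funpow_commute_on:
  assumes "f ` X \<subseteq> X" and "\<forall>x\<in>X. f (g x) = g (f x)" and "x \<in> X"
  shows "(f ^^ n) (g x) = g ((f ^^ n) x)"
proof (induction n)
  case (Suc n)
  have "(f ^^ n) x \<in> X" using funpow_image_subset[OF assms(1)] assms(3) by blast
  with Suc assms(2) show ?case by simp
qed simp

lemma eq_if_dist_le_mult:
  fixes d :: "'a \<Rightarrow> 'a \<Rightarrow> real"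
  assumes "x \<noteq> y \<Longrightarrow> \<epsilon> \<le> d x y" and "0 < \<epsilon>" and "d x y \<le> \<alpha> * d x y" and "\<alpha> < 1"
  shows "x = y"
  using assms mult_le_cancel_right1[of "d x y" \<alpha>] by fastforce

lemma coincidence_point_uniformly_discrete:
  fixes d :: "'a \<Rightarrow> 'a \<Rightarrow> real"
  assumes discrete: "\<And>x y. x \<in> X \<Longrightarrow> y \<in> X \<Longrightarrow> x \<noteq> y \<Longrightarrow> \<epsilon> \<le> d x y" and "0 < \<epsilon>"
    and "X \<noteq> {}" and R_maps: "R ` X \<subseteq> X" and T_maps: "T ` X \<subseteq> X"
    and range_sub: "R ` X \<subseteq> T ` X"
    and \<alpha>: "0 < \<alpha>" "\<alpha> < 1"
    and contr: "\<And>x y. x \<in> X \<Longrightarrow> y \<in> X \<Longrightarrow> d (R x) (R y) \<le> \<alpha> * d (T x) (T y)"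
  obtains x where "x \<in> X" "R x = T x"
proof -
  obtain x\<^sub>0 where "x\<^sub>0 \<in> X" using \<open>X \<noteq> {}\<close> by blast
  define D where "D = d (R x\<^sub>0) (T x\<^sub>0)"
  have shrink: "\<exists>x\<in>X. d (R x) (T x) \<le> \<alpha> ^ m * D" for m
  proof (induction m)
    case 0
    show ?case using \<open>x\<^sub>0 \<in> X\<close> D_def by auto
  next
    case (Suc m)
    then obtain x where x: "x \<in> X" "d (R x) (T x) \<le> \<alpha> ^ m * D" by blast
    have "R x \<in> T ` X" using range_sub x(1) by blast
    then obtain x' where x': "x' \<in> X" "T x' = R x" by (metis imageE)
    have "d (R x') (T x') = d (R x') (R x)" using x' by simp
    also have "\<dots> \<le> \<alpha> * d (R x) (T x)" using contr[OF x'(1) x(1)] x' by simp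
    also have "\<dots> \<le> \<alpha> ^ Suc m * D" using x(2) \<alpha>(1) by simp
    finally show ?case using x'(1) by blast
  qed
  have "(\<lambda>m. \<alpha> ^ m * D) \<longlonglongrightarrow> 0 * D"
    by (intro tendsto_intros LIMSEQ_power_zero) (use \<alpha> in auto)
  then have "eventually (\<lambda>m. \<alpha> ^ m * D < \<epsilon>) sequentially"
    using \<open>0 < \<epsilon>\<close> by (intro order_tendstoD) auto
  then obtain m where "\<alpha> ^ m * D < \<epsilon>" unfolding eventually_sequentially by blast
  with shrink[of m] obtain x where x: "x \<in> X" "d (R x) (T x) < \<epsilon>"
    by (meson order_le_less_trans)
  moreover have "R x \<in> X" "T x \<in> X" using x(1) R_maps T_maps by auto
  ultimately have "R x = T x" using discrete by (meson not_le)
  with x(1) show ?thesis by (rule that)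
qed

lemma common_fixed_point_uniformly_discrete:
  fixes d :: "'a \<Rightarrow> 'a \<Rightarrow> real"
  assumes discrete: "\<And>x y. x \<in> X \<Longrightarrow> y \<in> X \<Longrightarrow> x \<noteq> y \<Longrightarrow> \<epsilon> \<le> d x y" and "0 < \<epsilon>"
    and "X \<noteq> {}" and R_maps: "R ` X \<subseteq> X" and T_maps: "T ` X \<subseteq> X"
    and commute: "\<forall>x\<in>X. R (T x) = T (R x)"
    and range_sub: "R ` X \<subseteq> T ` X"
    and \<alpha>: "0 < \<alpha>" "\<alpha> < 1"
    and contr: "\<And>x y. x \<in> X \<Longrightarrow> y \<in> X \<Longrightarrow> d (R x) (R y) \<le> \<alpha> * d (T x) (T y)"
  obtains y where "y \<in> X" "R y = y" "T y = y"
proof -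
  obtain x where x: "x \<in> X" "R x = T x"
    using coincidence_point_uniformly_discrete[where d = d,
        OF discrete \<open>0 < \<epsilon>\<close> \<open>X \<noteq> {}\<close> R_maps T_maps range_sub \<alpha> contr] .
  define y where "y = T x"
  have "y \<in> X" using x(1) T_maps y_def by blast
  have Ry: "R y = T y" using commute x y_def by simp
  have "d (R y) y = d (R y) (R x)" using x(2) y_def by simp
  also have "\<dots> \<le> \<alpha> * d (R y) y" using contr[OF \<open>y \<in> X\<close> x(1)] Ry y_def by simp
  finally have "R y = y"
    using \<open>y \<in> X\<close> R_maps \<open>0 < \<epsilon>\<close> \<alpha>(2)
    by (intro eq_if_dist_le_mult[where d = d and \<epsilon> = \<epsilon> and \<alpha> = \<alpha>]) (auto intro: discrete)
  with Ry show ?thesis using that \<open>y \<in> X\<close> by simp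
qed

lemma common_fixed_point_unique:
  fixes d :: "'a \<Rightarrow> 'a \<Rightarrow> real"
  assumes discrete: "x \<noteq> y \<Longrightarrow> \<epsilon> \<le> d x y" and "0 < \<epsilon>" and "\<alpha> < 1"
    and contr: "d (R x) (R y) \<le> \<alpha> * d (T x) (T y)"
    and "R x = x" "T x = x" "R y = y" "T y = y"
  shows "x = y"
  by (rule eq_if_dist_le_mult[where d = d and \<epsilon> = \<epsilon> and \<alpha> = \<alpha>]) (use assms in auto)

theorem corollary5p4:
  fixes X :: "(int ^ 'n) set"
    and \<kappa> :: "int ^ 'n \<Rightarrow> int ^ 'n \<Rightarrow> bool"
    and p :: ereal
    and S T :: "int ^ 'n \<Rightarrow> int ^ 'n"
    and \<alpha> :: real
    and k :: nat
  assumes X_ne: "X \<noteq> {}"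
    and adj: "adjacency_on X \<kappa>"
    and p_ge: "1 \<le> p"
    and complete: "dcomplete X (lp_dist p)"
    and S_maps: "S ` X \<subseteq> X"
    and T_maps: "T ` X \<subseteq> X"
    and commute: "\<forall>x\<in>X. S (T x) = T (S x)"
    and range_sub: "S ` X \<subseteq> T ` X"
    and alpha: "0 < \<alpha>" "\<alpha> < 1"
    and k_pos: "0 < k"
    and contr: "\<forall>x\<in>X. \<forall>y\<in>X. lp_dist p ((S ^^ k) x) ((S ^^ k) y) \<le> \<alpha> * lp_dist p (T x) (T y)"
  shows "\<exists>z\<in>X. S z = z \<and> T z = z"
proof -
  let ?R = "S ^^ k"
  have discrete: "\<And>x y. x \<in> X \<Longrightarrow> y \<in> X \<Longrightarrow> x \<noteq> y \<Longrightarrow> 1 \<le> lp_dist p x y"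
    using lp_dist_ge_one[OF p_ge] by blast
  have R_maps: "?R ` X \<subseteq> X" using funpow_image_subset[OF S_maps] .
  have R_range: "?R ` X \<subseteq> T ` X"
  proof -
    obtain j where "k = Suc j" using k_pos gr0_implies_Suc by blast
    then have "?R ` X = S ` (S ^^ j) ` X" by (simp add: image_comp)
    also have "\<dots> \<subseteq> S ` X" using funpow_image_subset[OF S_maps] by (rule image_mono)
    finally show ?thesis using range_sub by blast
  qed
  have R_commute: "\<forall>x\<in>X. ?R (T x) = T (?R x)" using funpow_commute_on[OF S_maps commute] by blast
  obtain y where y: "y \<in> X" "?R y = y" "T y = y"
    using common_fixed_point_uniformly_discrete[where d = "lp_dist p",
        OF discrete zero_less_one X_ne R_maps T_maps R_commute R_range alpha] contr by blast
  have "S y \<in> X" "?R (S y) = S y" "T (S y) = S y"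
    using S_maps y commute by (auto simp flip: funpow_swap1)
  then have "S y = y"
    using common_fixed_point_unique[where d = "lp_dist p",
        OF lp_dist_ge_one[OF p_ge] zero_less_one alpha(2)] contr y by blast
  with y show ?thesis by blast
qed

end
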